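(* Let $p$ and $b$ be distinct primes and $a$ a positive integer with $b\mid p^a-1$. Then $$g\Big(\tfrac{p^{ab}-1}{b(p^a-1)},\,p^{ab}\Big)=b.$$ If moreover $p$ and $b$ are both odd, then $$g\Big(\tfrac{2(p^{ab}-1)}{b(p^a-1)},\,p^{ab}\Big)=2b.$$
   Context: For a prime power $q$ and a positive integer $k$, the Waring number $g(k,q)$ is the smallest $s$ (if it exists) such that every element of $\mathbb{F}_q$ is a sum of $s$ $k$-th powers of elements of $\mathbb{F}_q$. *)

theory Defs
  imports "HOL-Computational_Algebra.Primes"
begin

definition sum_of_kth_powers :: "nat \<Rightarrow> nat \<Rightarrow> 'a::field \<Rightarrow> bool" where
  "sum_of_kth_powers k s x \<longleftrightarrow> (\<exists>f :: nat \<Rightarrow> 'a. (\<Sum>i<s. f i ^ k) = x)"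

text \<open>Waring number g(k,q) of the finite field 'a (with q = card UNIV):
  the least s such that every element is a sum of s k-th powers; None if no such s exists.\<close>
definition waring_number :: "'a::{field,finite} itself \<Rightarrow> nat \<Rightarrow> nat option" where
  "waring_number _ k =
     (if \<exists>s. \<forall>x::'a. sum_of_kth_powers k s x
      then Some (LEAST s. \<forall>x::'a. sum_of_kth_powers k s x) else None)"

end

theory Submission
  imports "HOL-Algebra.Algebraic_Closure_Type" "HOL-Number_Theory.Residues" Defs
begin

text \<open>Let \<open>Q = p\<^sup>a\<close>, let \<open>F\<close> be the field with \<open>Q\<^sup>b\<close> elements, \<open>K\<close> its subfield fixed by
  \<open>x \<mapsto> x\<^sup>Q\<close>, and \<open>k = (Q\<^sup>b - 1) / (b (Q - 1))\<close>. For a generator \<open>g\<close> of \<open>F\<^sup>*\<close> and \<open>r\<close> not divisible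
  by \<open>b\<close>, the element \<open>t = g\<^bsup>r k\<^esup>\<close> satisfies \<open>t\<^sup>Q = z t\<close> with \<open>z = t\<^bsup>Q - 1\<^esup> \<in> K\<close> of order \<open>b\<close>.
  So \<open>1, t, \<dots>, t\<^bsup>b - 1\<^esup>\<close> are Frobenius eigenvectors with distinct eigenvalues and form a
  \<open>K\<close>-basis of \<open>F\<close>, and the \<open>r k\<close>-th powers of \<open>F\<close> are exactly the monomials \<open>c\<^sup>r t\<^sup>i\<close> with
  \<open>c \<in> K\<close>. Sums of \<open>r k\<close>-th powers can therefore be read off coordinatewise, giving
  \<open>g(r k, F) = b \<cdot> g(r, K)\<close>: for \<open>r = 1\<close> each coordinate is a single element of \<open>K\<close>; for \<open>r = 2\<close>
  and \<open>p\<close> odd every element of \<open>K\<close> is a sum of two squares, but not every element is a square.\<close>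

section \<open>Multiplicative generators of finite fields\<close>

definition mult_generator :: "'a::field \<Rightarrow> bool" where
  "mult_generator g \<longleftrightarrow> g \<noteq> 0 \<and> (\<forall>x. x \<noteq> 0 \<longrightarrow> (\<exists>i. x = g ^ i))"

lemma finite_field_has_mult_generator: "\<exists>g::'a::{field,finite}. mult_generator g"
proof -
  let ?R = "ring_of_type_algebra :: 'a ring"
  interpret R: field ?R by (rule field_from_type_algebra)
  obtain g where g: "g \<in> carrier (mult_of ?R)"
    and gen: "carrier (mult_of ?R) = {g [^]\<^bsub>?R\<^esub> i | i::nat. i \<in> UNIV}"
    using R.finite_field_mult_group_has_gen by (auto simp: ring_of_type_algebra_def)
  have "g [^]\<^bsub>?R\<^esub> i = g ^ i" for i :: nat
    by (induction i) (simp_all add: ring_of_type_algebra_def)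
  with g gen have "g \<noteq> 0" "UNIV - {0} = range (\<lambda>i. g ^ i)"
    by (auto simp: ring_of_type_algebra_def)
  then show ?thesis
    unfolding mult_generator_def by blast
qed

lemma power_card_minus_one_eq_1:
  fixes x :: "'a::{field,finite}"
  assumes "x \<noteq> 0"
  shows "x ^ (card (UNIV::'a set) - 1) = 1"
proof -
  have "(\<Prod>y\<in>UNIV-{0}. x * y) = (\<Prod>y\<in>UNIV-{0::'a}. y)"
    by (rule prod.reindex_bij_witness[of _ "\<lambda>y. y / x" "\<lambda>y. x * y"]) (use assms in auto)
  moreover have "(\<Prod>y\<in>UNIV-{0}. x * y) = x ^ (card (UNIV::'a set) - 1) * (\<Prod>y\<in>UNIV-{0::'a}. y)"
    by (simp add: prod.distrib card_Diff_singleton)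
  ultimately show ?thesis
    by (metis mult_cancel_right2 prod_zero_iff DiffD2 finite insertI1)
qed

lemma card_field_ge_2: "card (UNIV :: 'a::{field,finite} set) \<ge> 2"
  using card_mono[of "UNIV :: 'a set" "{0, 1}"] by simp

lemma nonzero_card_minus_one:
  "card (UNIV :: 'a::{field,finite} set) - 1 = n \<Longrightarrow> n \<noteq> 0"
  using card_field_ge_2[where 'a='a] by linarith

lemma mult_generator_power_eq_iff:
  fixes g :: "'a::{field,finite}"
  assumes "mult_generator g"
  shows "g ^ i = g ^ j \<longleftrightarrow> [i = j] (mod (card (UNIV::'a set) - 1))"
proof -
  define N where "N = card (UNIV::'a set) - 1"
  have g0: "g \<noteq> 0" and gen: "\<And>x. x \<noteq> 0 \<Longrightarrow> \<exists>i. x = g ^ i"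
    using assms by (auto simp: mult_generator_def)
  have "N > 0" using card_field_ge_2[where 'a='a] by (simp add: N_def)
  have mod_N: "g ^ n = g ^ (n mod N)" for n
  proof -
    have "g ^ n = (g ^ N) ^ (n div N) * g ^ (n mod N)"
      by (metis div_mult_mod_eq power_add power_mult mult.commute)
    then show ?thesis using power_card_minus_one_eq_1[OF g0] by (simp add: N_def)
  qed
  have "(\<lambda>i. g ^ i) ` {..<N} = UNIV - {0}"
  proof
    show "UNIV - {0} \<subseteq> (\<lambda>i. g ^ i) ` {..<N}"
    proof
      fix x :: 'a assume "x \<in> UNIV - {0}"
      then obtain i where "x = g ^ (i mod N)" using gen mod_N by auto
      then show "x \<in> (\<lambda>i. g ^ i) ` {..<N}" using \<open>N > 0\<close> by auto
    qed
  qed (use g0 in auto)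
  then have "card ((\<lambda>i. g ^ i) ` {..<N}) = card {..<N}"
    by (simp add: card_Diff_singleton N_def)
  then have inj: "inj_on (\<lambda>i. g ^ i) {..<N}"
    by (simp add: eq_card_imp_inj_on)
  have "g ^ i = g ^ j \<longleftrightarrow> g ^ (i mod N) = g ^ (j mod N)"
    using mod_N by metis
  also have "\<dots> \<longleftrightarrow> i mod N = j mod N"
    using inj_onD[OF inj] \<open>N > 0\<close> by auto
  finally show ?thesis by (simp add: cong_def N_def)
qed

lemma CHAR_eq_of_card_eq_prime_power:
  assumes "prime p" and "card (UNIV::'a::{field,finite} set) = p ^ n"
  shows "CHAR('a) = p"
proof -
  have "prime CHAR('a)"
    by (simp add: finite_imp_CHAR_pos prime_CHAR_semidom)
  moreover have "CHAR('a) dvd p ^ n"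
    using CHAR_dvd_CARD[where 'a='a] assms(2) by simp
  ultimately show ?thesis
    using assms(1) prime_dvd_power primes_dvd_imp_eq by blast
qed

section \<open>The Frobenius-fixed subfield\<close>

definition frobenius_fixed :: "nat \<Rightarrow> 'a::field set" where
  "frobenius_fixed Q = {x. x ^ Q = x}"

context
  fixes Q e :: nat
  assumes prime_char: "prime CHAR('a::field)" and Q_def: "Q = CHAR('a) ^ e"
begin

lemma frobenius_add: "(x + y :: 'a) ^ Q = x ^ Q + y ^ Q"
  using freshmans_dream'[OF prime_char Q_def] .

lemma frobenius_diff: "(x - y :: 'a) ^ Q = x ^ Q - y ^ Q"
  using frobenius_add[of "x - y" y] by (simp add: algebra_simps)

lemma frobenius_sum: "(\<Sum>i\<in>A. f i :: 'a) ^ Q = (\<Sum>i\<in>A. f i ^ Q)"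
  using freshmans_dream_sum'[OF prime_char Q_def] .

lemma frobenius_fixed_zero: "(0::'a) \<in> frobenius_fixed Q"
  using prime_char by (simp add: frobenius_fixed_def Q_def prime_gt_0_nat)

lemma frobenius_fixed_one: "(1::'a) \<in> frobenius_fixed Q"
  by (simp add: frobenius_fixed_def)

lemma frobenius_fixed_add: "x \<in> frobenius_fixed Q \<Longrightarrow> y \<in> frobenius_fixed Q \<Longrightarrow> x + (y::'a) \<in> frobenius_fixed Q"
  by (simp add: frobenius_fixed_def frobenius_add)

lemma frobenius_fixed_mult: "x \<in> frobenius_fixed Q \<Longrightarrow> y \<in> frobenius_fixed Q \<Longrightarrow> x * (y::'a) \<in> frobenius_fixed Q"
  by (simp add: frobenius_fixed_def power_mult_distrib)

lemma frobenius_fixed_diff: "x \<in> frobenius_fixed Q \<Longrightarrow> y \<in> frobenius_fixed Q \<Longrightarrow> x - (y::'a) \<in> frobenius_fixed Q"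
  by (simp add: frobenius_fixed_def frobenius_diff)

text \<open>Frobenius acts on \<open>c t\<^sup>i\<close> (\<open>c\<close> fixed) by the eigenvalue \<open>z\<^sup>i\<close>; subtracting
  \<open>z\<^sup>i\<^sup>0\<close> times a relation from its Frobenius image kills the \<open>i\<^sub>0\<close> term.\<close>
lemma frobenius_eigenvector_powers_independent:
  fixes t z :: 'a
  assumes t: "t \<noteq> 0" and tz: "t ^ Q = t * z" and z: "z \<in> frobenius_fixed Q"
    and "finite I" and "inj_on (\<lambda>i. z ^ i) I"
    and "\<forall>i\<in>I. c i \<in> frobenius_fixed Q" and "(\<Sum>i\<in>I. c i * t ^ i) = 0"
  shows "\<forall>i\<in>I. c i = 0"
  using assms(4-)
proof (induction I arbitrary: c rule: finite_induct)
  case empty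
  then show ?case by simp
next
  case (insert i0 I)
  have z_pow: "(z ^ i) ^ Q = z ^ i" for i
    using z by (simp add: frobenius_fixed_def flip: power_mult) (metis mult.commute power_mult)
  have frob_term: "(c i * t ^ i) ^ Q = c i * z ^ i * t ^ i" if "i \<in> insert i0 I" for i
  proof -
    have "(t ^ i) ^ Q = (t ^ Q) ^ i"
      by (metis power_mult mult.commute)
    moreover have "c i ^ Q = c i"
      using insert.prems(2) that by (auto simp: frobenius_fixed_def)
    ultimately show ?thesis
      using tz by (simp add: power_mult_distrib)
  qed
  define c' where "c' i = c i * (z ^ i - z ^ i0)" for i
  have "(\<Sum>i\<in>insert i0 I. c i * z ^ i * t ^ i) = (\<Sum>i\<in>insert i0 I. c i * t ^ i) ^ Q"
    by (simp add: frobenius_sum frob_term)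
  also have "\<dots> = 0"
    using insert.prems(3) prime_char by (simp add: Q_def prime_gt_0_nat)
  finally have "(\<Sum>i\<in>insert i0 I. c' i * t ^ i)
      = 0 - z ^ i0 * (\<Sum>i\<in>insert i0 I. c i * t ^ i)"
    by (simp add: c'_def sum_distrib_left algebra_simps sum_subtractf)
  then have "(\<Sum>i\<in>I. c' i * t ^ i) = 0"
    using insert.hyps insert.prems(3) by (simp add: c'_def)
  moreover have "\<forall>i\<in>I. c' i \<in> frobenius_fixed Q"
    using insert.prems(2) z_pow by (simp add: c'_def frobenius_fixed_def power_mult_distrib frobenius_diff)
  ultimately have "\<forall>i\<in>I. c' i = 0"
    using insert.IH insert.prems(1) by (meson inj_on_insert)
  moreover have "z ^ i \<noteq> z ^ i0" if "i \<in> I" for i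
    using inj_onD[OF insert.prems(1), of i i0] insert.hyps(2) that by auto
  ultimately have rest: "\<forall>i\<in>I. c i = 0"
    by (auto simp: c'_def)
  then have "c i0 * t ^ i0 = 0"
    using insert.prems(3) insert.hyps by simp
  with rest t show ?case by simp
qed

end

section \<open>A power basis adapted to \<open>k\<close>-th powers\<close>

definition power_basis :: "'a::field set \<Rightarrow> nat \<Rightarrow> 'a \<Rightarrow> bool" where
  "power_basis K b t \<longleftrightarrow> bij_betw (\<lambda>c. \<Sum>i<b. c i * t ^ i) ({..<b} \<rightarrow>\<^sub>E K) UNIV"

lemma power_basis_frobenius_eigenvector:
  fixes t z :: "'a::{field,finite}"
  assumes char: "prime CHAR('a)" "Q = CHAR('a) ^ e"
    and t: "t \<noteq> 0" and tz: "t ^ Q = t * z" and z: "z \<in> frobenius_fixed Q"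
    and inj: "inj_on (\<lambda>i. z ^ i) {..<b}"
    and card_fixed: "Q \<le> card (frobenius_fixed Q :: 'a set)"
    and card: "card (UNIV :: 'a set) = Q ^ b"
  shows "power_basis (frobenius_fixed Q) b t"
proof -
  let ?K = "frobenius_fixed Q :: 'a set"
  let ?comb = "\<lambda>c. \<Sum>i<b. c i * t ^ i"
  have inj_comb: "inj_on ?comb ({..<b} \<rightarrow>\<^sub>E ?K)"
  proof (rule inj_onI)
    fix c d assume c: "c \<in> {..<b} \<rightarrow>\<^sub>E ?K" and d: "d \<in> {..<b} \<rightarrow>\<^sub>E ?K"
      and eq: "?comb c = ?comb d"
    have "\<forall>i\<in>{..<b}. c i - d i \<in> ?K"
      using c d frobenius_fixed_diff[OF char] by auto
    moreover have "(\<Sum>i<b. (c i - d i) * t ^ i) = 0"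
      using eq by (simp add: left_diff_distrib sum_subtractf)
    ultimately have "\<forall>i\<in>{..<b}. c i - d i = 0"
      by (rule frobenius_eigenvector_powers_independent[OF char t tz z finite_lessThan inj])
    then show "c = d"
      using c d by (auto intro: PiE_ext)
  qed
  have "card (?comb ` ({..<b} \<rightarrow>\<^sub>E ?K)) = card ?K ^ b"
    using card_image[OF inj_comb] by (simp add: card_PiE)
  moreover have "card (?comb ` ({..<b} \<rightarrow>\<^sub>E ?K)) \<le> Q ^ b"
    unfolding card[symmetric] by (rule card_mono) simp_all
  moreover have "Q ^ b \<le> card ?K ^ b"
    using card_fixed by (simp add: power_mono)
  ultimately have "card (?comb ` ({..<b} \<rightarrow>\<^sub>E ?K)) = card (UNIV :: 'a set)"
    using card by linarith
  then show ?thesis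
    using inj_comb by (simp add: power_basis_def bij_betw_def card_eq_UNIV_imp_eq_UNIV)
qed

lemma mult_dvd_power_minus_one:
  fixes Q b :: nat
  assumes "b dvd Q - 1"
  shows "b * (Q - 1) dvd Q ^ b - 1"
proof (cases "Q = 0")
  case False
  have "[Q = 1] (mod b)"
    using assms False by (simp add: cong_altdef_nat)
  then have "[Q ^ i = 1] (mod b)" for i
    by (metis cong_pow power_one)
  then have "[(\<Sum>i<b. Q ^ i) = (\<Sum>i<b. 1)] (mod b)"
    by (intro cong_sum) auto
  then have "b dvd (\<Sum>i<b. Q ^ i)"
    by (simp add: cong_0_iff[symmetric] cong_def)
  moreover have "Q ^ b - 1 = (Q - 1) * (\<Sum>i<b. Q ^ i)"
  proof -
    have "int (Q ^ b - 1) = int Q ^ b - 1"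
      using False by (simp add: of_nat_diff Suc_leI)
    also have "\<dots> = (int Q - 1) * (\<Sum>i<b. int Q ^ i)"
      by (rule power_diff_1_eq)
    also have "\<dots> = int ((Q - 1) * (\<Sum>i<b. Q ^ i))"
      using False by (simp add: of_nat_diff)
    finally show ?thesis
      by (simp only: of_nat_eq_iff)
  qed
  ultimately show ?thesis
    by (simp add: mult.commute mult_dvd_mono)
qed (cases b, simp_all)

lemma mult_generator_power_fixed_iff:
  fixes g :: "'a::{field,finite}"
  assumes g: "mult_generator g"
    and N: "card (UNIV :: 'a set) - 1 = (Q - 1) * L" and Q: "Q \<ge> 2"
  shows "g ^ j \<in> frobenius_fixed Q \<longleftrightarrow> L dvd j"
proof -
  have "g ^ j \<in> frobenius_fixed Q \<longleftrightarrow> g ^ (j * Q) = g ^ j"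
    by (simp add: frobenius_fixed_def power_mult)
  also have "\<dots> \<longleftrightarrow> (Q - 1) * L dvd j * Q - j"
    using Q by (simp add: mult_generator_power_eq_iff[OF g, unfolded N] cong_altdef_nat)
  also have "j * Q - j = j * (Q - 1)"
    by (simp add: diff_mult_distrib2)
  also have "(Q - 1) * L dvd j * (Q - 1) \<longleftrightarrow> L dvd j"
    using Q by (simp add: mult.commute[of j])
  finally show ?thesis .
qed

lemma card_frobenius_fixed_ge:
  assumes "(Q - 1) dvd card (UNIV :: 'a::{field,finite} set) - 1" and Q: "Q \<ge> 2"
  shows "Q \<le> card (frobenius_fixed Q :: 'a set)"
proof -
  obtain g :: 'a where g: "mult_generator g"
    using finite_field_has_mult_generator by blast
  obtain L where N: "card (UNIV :: 'a set) - 1 = (Q - 1) * L"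
    using assms(1) by blast
  have "L > 0"
    using N card_field_ge_2[where 'a='a] by (cases L) auto
  define f where "f u = g ^ (L * u)" for u
  have "inj_on f {..<Q - 1}"
  proof (rule inj_onI)
    fix u v assume "u \<in> {..<Q - 1}" "v \<in> {..<Q - 1}" "f u = f v"
    then have "L * u = L * v"
      using \<open>L > 0\<close> by (intro cong_less_modulus_unique_nat[of _ _ "(Q - 1) * L"])
        (auto simp: f_def mult_generator_power_eq_iff[OF g, unfolded N])
    then show "u = v"
      using \<open>L > 0\<close> by simp
  qed
  have "0 \<notin> f ` {..<Q - 1}"
    using g by (auto simp: f_def mult_generator_def)
  have "f u \<in> frobenius_fixed Q" for u
    unfolding f_def mult_generator_power_fixed_iff[OF g N Q] by simp
  then have "insert 0 (f ` {..<Q - 1}) \<subseteq> frobenius_fixed Q"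
    using Q by (auto simp: frobenius_fixed_def)
  then have "card (insert 0 (f ` {..<Q - 1})) \<le> card (frobenius_fixed Q :: 'a set)"
    by (simp add: card_mono)
  moreover have "card (insert 0 (f ` {..<Q - 1})) = Q"
    using Q \<open>inj_on f {..<Q - 1}\<close> \<open>0 \<notin> f ` {..<Q - 1}\<close> by (simp add: card_image)
  ultimately show ?thesis by simp
qed

lemma range_power_mult_generator:
  fixes g :: "'a::{field,finite}"
  assumes g: "mult_generator g"
    and N: "card (UNIV :: 'a set) - 1 = (Q - 1) * (b * k)" and Q: "Q \<ge> 2" and "r > 0"
  shows "range (\<lambda>y. y ^ (r * k)) = {c ^ r * (g ^ (r * k)) ^ i | c i. c \<in> frobenius_fixed Q \<and> i < b}"
proof -
  have "b > 0" "k > 0"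
    using nonzero_card_minus_one[OF N] by simp_all
  have zero_fixed: "(0::'a) \<in> frobenius_fixed Q"
    using Q by (simp add: frobenius_fixed_def)
  have coset: "(g ^ (b * u + i)) ^ (r * k) = (g ^ (b * k * u)) ^ r * (g ^ (r * k)) ^ i" for u i
    by (simp add: algebra_simps flip: power_mult power_add)
  show ?thesis
  proof (intro Set.set_eqI iffI)
    fix x :: 'a assume "x \<in> range (\<lambda>y. y ^ (r * k))"
    then obtain y where x: "x = y ^ (r * k)" by blast
    show "x \<in> {c ^ r * (g ^ (r * k)) ^ i | c i. c \<in> frobenius_fixed Q \<and> i < b}"
    proof (cases "y = 0")
      case True
      then show ?thesis
        using x zero_fixed \<open>r > 0\<close> \<open>k > 0\<close> \<open>b > 0\<close>
        by (intro CollectI exI[of _ 0]) (auto simp: power_0_left)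
    next
      case False
      then obtain j where "y = g ^ j"
        using g by (auto simp: mult_generator_def)
      then have "x = (g ^ (b * k * (j div b))) ^ r * (g ^ (r * k)) ^ (j mod b)"
        using x coset[of "j div b" "j mod b"] by simp
      moreover have "g ^ (b * k * (j div b)) \<in> frobenius_fixed Q"
        by (simp add: mult_generator_power_fixed_iff[OF g N Q])
      ultimately show ?thesis
        using \<open>b > 0\<close> by (blast intro: mod_less_divisor)
    qed
  next
    fix x :: 'a assume "x \<in> {c ^ r * (g ^ (r * k)) ^ i | c i. c \<in> frobenius_fixed Q \<and> i < b}"
    then obtain c i where x: "x = c ^ r * (g ^ (r * k)) ^ i" and c: "c \<in> frobenius_fixed Q"
      by blast
    show "x \<in> range (\<lambda>y. y ^ (r * k))"
    proof (cases "c = 0")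
      case True
      then show ?thesis
        using x \<open>r > 0\<close> \<open>k > 0\<close> by (intro range_eqI[of _ _ 0]) (simp add: power_0_left)
    next
      case False
      then obtain j where "c = g ^ j"
        using g by (auto simp: mult_generator_def)
      moreover have "b * k dvd j"
        using c \<open>c = g ^ j\<close> by (simp add: mult_generator_power_fixed_iff[OF g N Q])
      ultimately obtain u where "c = g ^ (b * k * u)"
        by blast
      then show ?thesis
        using x coset[of u i] by (metis rangeI)
    qed
  qed
qed

lemma inj_on_power_mult_generator:
  fixes g :: "'a::{field,finite}"
  assumes g: "mult_generator g"
    and N: "card (UNIV :: 'a set) - 1 = (Q - 1) * (b * k)" and "coprime r b"
  shows "inj_on (\<lambda>i. ((g ^ (r * k)) ^ (Q - 1)) ^ i) {..<b}"
proof (rule inj_onI)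
  fix i j assume i: "i \<in> {..<b}" and j: "j \<in> {..<b}"
    and "((g ^ (r * k)) ^ (Q - 1)) ^ i = ((g ^ (r * k)) ^ (Q - 1)) ^ j"
  then have "[(r * i) * (k * (Q - 1)) = (r * j) * (k * (Q - 1))] (mod b * (k * (Q - 1)))"
    by (simp add: mult_generator_power_eq_iff[OF g, unfolded N] ac_simps flip: power_mult)
  moreover have "k * (Q - 1) > 0"
    using nonzero_card_minus_one[OF N] by simp
  ultimately have "[r * i = r * j] (mod b)"
    by (simp add: cong_def)
  then have "[i = j] (mod b)"
    using \<open>coprime r b\<close> by (simp add: cong_mult_lcancel_nat)
  then show "i = j"
    using i j by (simp add: cong_less_modulus_unique_nat)
qed

lemma powers_in_frobenius_power_basis:
  fixes Q b r :: nat
  assumes p: "prime p" and Q: "Q = p ^ a" and card: "card (UNIV :: 'a::{field,finite} set) = Q ^ b"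
    and b: "prime b" "b dvd Q - 1" and r: "\<not> b dvd r"
  defines "k \<equiv> (Q ^ b - 1) div (b * (Q - 1))"
  shows "\<exists>t::'a. power_basis (frobenius_fixed Q) b t \<and>
           range (\<lambda>y. y ^ (r * k)) = {c ^ r * t ^ i | c i. c \<in> frobenius_fixed Q \<and> i < b}"
proof -
  have "card (UNIV :: 'a set) = p ^ (a * b)"
    using card by (simp add: Q power_mult)
  then have char: "CHAR('a) = p"
    by (rule CHAR_eq_of_card_eq_prime_power[OF p])
  have "Q \<ge> 2"
  proof (rule ccontr)
    assume "\<not> Q \<ge> 2"
    then have "Q ^ b \<le> 1"
      using power_le_one[of Q b] by simp
    then show False
      using card card_field_ge_2[where 'a='a] by simp
  qed
  have N: "card (UNIV :: 'a set) - 1 = (Q - 1) * (b * k)"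
    using dvd_mult_div_cancel[OF mult_dvd_power_minus_one[OF b(2)]] by (simp add: card k_def ac_simps)
  obtain g :: 'a where g: "mult_generator g"
    using finite_field_has_mult_generator by blast
  define t where "t = g ^ (r * k)"
  define z where "z = t ^ (Q - 1)"
  have t0: "t \<noteq> 0"
    using g by (simp add: t_def mult_generator_def)
  have tz: "t ^ Q = t * z"
    using \<open>Q \<ge> 2\<close> by (simp add: z_def flip: power_Suc)
  have "b * k dvd r * k * (Q - 1)"
    using b(2) by (simp add: mult_dvd_mono mult.commute)
  then have z: "z \<in> frobenius_fixed Q"
    unfolding z_def t_def power_mult[symmetric] by (simp add: mult_generator_power_fixed_iff[OF g N \<open>Q \<ge> 2\<close>])
  have "coprime r b"
    using b(1) r by (simp add: prime_imp_coprime ac_simps)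
  have "Q \<le> card (frobenius_fixed Q :: 'a set)"
    using \<open>Q \<ge> 2\<close> by (intro card_frobenius_fixed_ge) (simp_all only: N dvd_triv_left)
  then have "power_basis (frobenius_fixed Q) b t"
    using power_basis_frobenius_eigenvector[OF _ _ t0 tz z _ _ card, of a]
      inj_on_power_mult_generator[OF g N \<open>coprime r b\<close>] p
    by (simp add: char Q z_def t_def)
  moreover have "r > 0"
    using r by (intro Nat.gr0I) simp
  ultimately show ?thesis
    using range_power_mult_generator[OF g N \<open>Q \<ge> 2\<close>] t_def by auto
qed

section \<open>Waring numbers computed in a power basis\<close>

lemma power_basis_coordinates_eq:
  assumes "power_basis K b t" and "\<forall>i<b. c i \<in> K" and "\<forall>i<b. d i \<in> K"
    and "(\<Sum>i<b. c i * t ^ i) = (\<Sum>i<b. d i * t ^ i)" and "i < b"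
  shows "c i = d i"
proof -
  have comb_restrict: "(\<Sum>i<b. restrict f {..<b} i * t ^ i) = (\<Sum>i<b. f i * t ^ i)" for f :: "nat \<Rightarrow> 'a"
    by (rule sum.cong) simp_all
  have inj: "inj_on (\<lambda>c. \<Sum>i<b. c i * t ^ i) ({..<b} \<rightarrow>\<^sub>E K)"
    using assms(1) by (simp add: power_basis_def bij_betw_def)
  have "restrict c {..<b} = restrict d {..<b}"
  proof (rule inj_onD[OF inj])
    show "(\<Sum>i<b. restrict c {..<b} i * t ^ i) = (\<Sum>i<b. restrict d {..<b} i * t ^ i)"
      using assms(4) by (simp only: comb_restrict)
    show "restrict c {..<b} \<in> {..<b} \<rightarrow>\<^sub>E K" "restrict d {..<b} \<in> {..<b} \<rightarrow>\<^sub>E K"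
      using assms(2,3) by auto
  qed
  then have "restrict c {..<b} i = restrict d {..<b} i"
    by simp
  with assms(5) show ?thesis
    by simp
qed

lemma sum_of_kth_powers_add:
  assumes "sum_of_kth_powers k s x" and "sum_of_kth_powers k s' y"
  shows "sum_of_kth_powers k (s + s') (x + y)"
proof -
  obtain f g where x: "x = (\<Sum>j<s. f j ^ k)" and y: "y = (\<Sum>j<s'. g j ^ k)"
    using assms by (auto simp: sum_of_kth_powers_def)
  define h where "h j = (if j < s then f j else g (j - s))" for j
  have "(\<Sum>j<s + s'. h j ^ k) = (\<Sum>j<s. f j ^ k) + (\<Sum>j<s'. g j ^ k)"
    by (induction s') (simp_all add: h_def add_ac)
  then show ?thesis
    unfolding sum_of_kth_powers_def x y by (rule exI[of _ h])
qed

lemma sum_of_kth_powers_sum: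
  assumes "\<And>i. i < n \<Longrightarrow> sum_of_kth_powers k s (f i)"
  shows "sum_of_kth_powers k (n * s) (\<Sum>i<n. f i)"
  using assms
proof (induction n)
  case 0
  then show ?case by (simp add: sum_of_kth_powers_def)
next
  case (Suc n)
  have "sum_of_kth_powers k (n * s + s) (sum f {..<n} + f n)"
    using Suc by (intro sum_of_kth_powers_add) simp_all
  then show ?case
    by (simp add: add.commute)
qed

lemma sum_of_kth_powers_sum_powers:
  assumes "\<forall>j<s. f j \<in> range (\<lambda>y. y ^ k)"
  shows "sum_of_kth_powers k s (\<Sum>j<s. f j)"
proof -
  have "\<forall>j. \<exists>y. j < s \<longrightarrow> f j = y ^ k"
    using assms by blast
  from choice[OF this] obtain y where "\<forall>j. j < s \<longrightarrow> f j = y j ^ k"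
    by blast
  then have "(\<Sum>j<s. y j ^ k) = (\<Sum>j<s. f j)"
    by simp
  then show ?thesis
    unfolding sum_of_kth_powers_def by (rule exI[of _ y])
qed

lemma waring_number_eqI:
  assumes "\<forall>x::'a::{field,finite}. sum_of_kth_powers k s x"
    and "\<And>s'. \<forall>x::'a. sum_of_kth_powers k s' x \<Longrightarrow> s \<le> s'"
  shows "waring_number TYPE('a) k = Some s"
  unfolding waring_number_def using assms by (auto intro!: Least_equality)

lemma exists_small_fiber:
  fixes \<iota> :: "nat \<Rightarrow> nat"
  assumes "\<iota> ` {..<s} \<subseteq> {..<b}" and "s < b * h"
  shows "\<exists>i<b. card {j\<in>{..<s}. \<iota> j = i} < h"
proof (rule ccontr)
  assume "\<not> ?thesis"
  then have "h \<le> card {j\<in>{..<s}. \<iota> j = i}" if "i < b" for i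
    using that by (meson not_less)
  then have "(\<Sum>i<b. h) \<le> (\<Sum>i<b. card {j\<in>{..<s}. \<iota> j = i})"
    by (intro sum_mono) simp
  also have "\<dots> = s"
    using sum.group[of "{..<s}" "{..<b}" \<iota> "\<lambda>_. 1 :: nat"] assms(1) by simp
  finally show False
    using assms(2) by simp
qed

text \<open>If the \<open>k\<close>-th powers are exactly the monomials \<open>w t\<^sup>i\<close> with \<open>w \<in> W\<close>, then writing an
  element as a sum of \<open>k\<close>-th powers amounts to writing each of its \<open>b\<close> coordinates as a sum of
  elements of \<open>W\<close>; so \<open>g(k)\<close> is \<open>b\<close> times the Waring number \<open>h\<close> of \<open>W\<close> in \<open>K\<close>.\<close>
lemma waring_number_power_basis:
  fixes t c0 :: "'a::{field,finite}" and K W :: "'a set"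
  assumes basis: "power_basis K b t"
    and K: "0 \<in> K" "\<And>x y. x \<in> K \<Longrightarrow> y \<in> K \<Longrightarrow> x + y \<in> K" and W: "W \<subseteq> K"
    and powers: "range (\<lambda>y. y ^ k) = {w * t ^ i | w i. w \<in> W \<and> i < b}"
    and sums: "\<And>c. c \<in> K \<Longrightarrow> \<exists>f. (\<forall>j<h. f j \<in> W) \<and> c = (\<Sum>j<h. f j)"
    and c0: "c0 \<in> K" "\<And>J (f :: nat \<Rightarrow> 'a). finite J \<Longrightarrow> card J < h \<Longrightarrow> \<forall>j\<in>J. f j \<in> W \<Longrightarrow> c0 \<noteq> sum f J"
  shows "waring_number TYPE('a) k = Some (b * h)"
proof (rule waring_number_eqI)
  show "\<forall>x::'a. sum_of_kth_powers k (b * h) x"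
  proof
    fix x :: 'a
    have "x \<in> (\<lambda>c. \<Sum>i<b. c i * t ^ i) ` ({..<b} \<rightarrow>\<^sub>E K)"
      using basis by (simp add: power_basis_def bij_betw_def)
    then obtain c where c: "\<forall>i<b. c i \<in> K" and x: "x = (\<Sum>i<b. c i * t ^ i)"
      by auto
    have "sum_of_kth_powers k h (c i * t ^ i)" if "i < b" for i
    proof -
      obtain f where f: "\<forall>j<h. f j \<in> W" and "c i = (\<Sum>j<h. f j)"
        using sums c \<open>i < b\<close> by blast
      then have "c i * t ^ i = (\<Sum>j<h. f j * t ^ i)"
        by (simp add: sum_distrib_right)
      moreover have "\<forall>j<h. f j * t ^ i \<in> range (\<lambda>y. y ^ k)"
        using f \<open>i < b\<close> unfolding powers by blast
      ultimately show ?thesis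
        by (simp add: sum_of_kth_powers_sum_powers)
    qed
    then show "sum_of_kth_powers k (b * h) x"
      unfolding x by (rule sum_of_kth_powers_sum)
  qed
next
  fix s assume all: "\<forall>x::'a. sum_of_kth_powers k s x"
  show "b * h \<le> s"
  proof (rule ccontr)
    assume "\<not> b * h \<le> s"
    obtain f where f: "(\<Sum>j<s. f j ^ k) = (\<Sum>i<b. c0 * t ^ i)"
      using all unfolding sum_of_kth_powers_def by blast
    have "f j ^ k \<in> {w * t ^ i | w i. w \<in> W \<and> i < b}" for j
      unfolding powers[symmetric] by simp
    then have "\<forall>j. \<exists>w. \<exists>i. w \<in> W \<and> i < b \<and> f j ^ k = w * t ^ i"
      by blast
    from choice[OF this] obtain w where "\<forall>j. \<exists>i. w j \<in> W \<and> i < b \<and> f j ^ k = w j * t ^ i"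
      by blast
    from choice[OF this] obtain \<iota> where "\<forall>j. w j \<in> W \<and> \<iota> j < b \<and> f j ^ k = w j * t ^ \<iota> j"
      by blast
    then have w: "\<And>j. w j \<in> W" and \<iota>: "\<And>j. \<iota> j < b" and f_w: "\<And>j. f j ^ k = w j * t ^ \<iota> j"
      by blast+
    define fiber where "fiber i = {j\<in>{..<s}. \<iota> j = i}" for i
    have "(\<Sum>j<s. f j ^ k) = (\<Sum>i<b. \<Sum>j\<in>fiber i. w j * t ^ \<iota> j)"
      unfolding f_w fiber_def by (rule sum.group[symmetric]) (use \<iota> in auto)
    also have "\<dots> = (\<Sum>i<b. sum w (fiber i) * t ^ i)"
      by (intro sum.cong refl) (simp add: fiber_def sum_distrib_right)
    finally have "(\<Sum>i<b. sum w (fiber i) * t ^ i) = (\<Sum>i<b. c0 * t ^ i)"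
      using f by simp
    moreover have "sum w A \<in> K" for A
      using K W w by (induction A rule: infinite_finite_induct) auto
    ultimately have "sum w (fiber i) = c0" if "i < b" for i
      using power_basis_coordinates_eq[OF basis _ _ _ that, of "\<lambda>i. sum w (fiber i)" "\<lambda>_. c0"] c0(1)
      by simp
    moreover obtain i where "i < b" "card (fiber i) < h"
      using exists_small_fiber[of \<iota> s b h] \<iota> \<open>\<not> b * h \<le> s\<close> by (auto simp: fiber_def)
    ultimately show False
      using c0(2)[of "fiber i" w] w by (simp add: fiber_def)
  qed
qed

section \<open>Squares in finite fields\<close>

lemma card_finite_subring_lt_twice_card_squares:
  fixes K :: "'a::field set"
  assumes "finite K" and mult: "\<And>x y. x \<in> K \<Longrightarrow> y \<in> K \<Longrightarrow> x * y \<in> K" and "0 \<in> K"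
  shows "card K < 2 * card ((\<lambda>x. x ^ 2) ` K)"
proof -
  let ?S = "(\<lambda>x. x ^ 2) ` K"
  have square_roots: "card {x\<in>K. x ^ 2 = s} \<le> 2" for s
  proof (cases "\<exists>x0\<in>K. x0 ^ 2 = s")
    case True
    then obtain x0 where "x0 ^ 2 = s" by blast
    then have "{x\<in>K. x ^ 2 = s} \<subseteq> {x0, -x0}"
      by (auto simp: power2_eq_iff)
    then have "card {x\<in>K. x ^ 2 = s} \<le> card {x0, -x0}"
      by (intro card_mono) auto
    also have "\<dots> \<le> 2"
      by (simp add: card_insert_if)
    finally show ?thesis .
  next
    case False
    then have "{x\<in>K. x ^ 2 = s} = {}"
      by auto
    then show ?thesis
      by (metis card.empty zero_le)
  qed
  have "K - {0} \<subseteq> (\<Union>s\<in>?S - {0}. {x\<in>K. x ^ 2 = s})"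
    by auto
  then have "card (K - {0}) \<le> card (\<Union>s\<in>?S - {0}. {x\<in>K. x ^ 2 = s})"
    using \<open>finite K\<close> by (intro card_mono) auto
  also have "\<dots> \<le> (\<Sum>s\<in>?S - {0}. card {x\<in>K. x ^ 2 = s})"
    using \<open>finite K\<close> by (intro card_UN_le) auto
  also have "\<dots> \<le> (\<Sum>s\<in>?S - {0}. 2)"
    by (intro sum_mono square_roots)
  also have "\<dots> = 2 * card (?S - {0})"
    by simp
  finally have "card K - 1 \<le> 2 * (card ?S - 1)"
    using \<open>0 \<in> K\<close> \<open>finite K\<close> by (simp add: card_Diff_singleton image_iff)
  moreover have "card ?S \<ge> 1"
    using \<open>0 \<in> K\<close> \<open>finite K\<close> by (auto simp: Suc_le_eq card_gt_0_iff)
  ultimately show ?thesis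
    by linarith
qed

text \<open>More than half of \<open>K\<close> are squares, so the squares and their translates \<open>c - x\<^sup>2\<close> meet.\<close>
lemma finite_subring_sum_two_squares:
  fixes K :: "'a::field set"
  assumes "finite K" and mult: "\<And>x y. x \<in> K \<Longrightarrow> y \<in> K \<Longrightarrow> x * y \<in> K"
    and diff: "\<And>x y. x \<in> K \<Longrightarrow> y \<in> K \<Longrightarrow> x - y \<in> K" and "0 \<in> K" and "c \<in> K"
  shows "\<exists>x\<in>K. \<exists>y\<in>K. c = x ^ 2 + y ^ 2"
proof -
  let ?S = "(\<lambda>x. x ^ 2) ` K"
  let ?T = "(\<lambda>s. c - s) ` ?S"
  have "?S \<subseteq> K"
    using mult by (auto simp: power2_eq_square)
  then have "?T \<subseteq> K"
    using diff \<open>c \<in> K\<close> by auto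
  have "card ?T = card ?S"
    by (intro card_image inj_onI) auto
  have "?S \<inter> ?T \<noteq> {}"
  proof
    assume "?S \<inter> ?T = {}"
    then have "card ?S + card ?T = card (?S \<union> ?T)"
      using \<open>finite K\<close> by (simp add: card_Un_disjoint)
    also have "\<dots> \<le> card K"
      using \<open>?S \<subseteq> K\<close> \<open>?T \<subseteq> K\<close> \<open>finite K\<close> by (intro card_mono) auto
    finally show False
      using card_finite_subring_lt_twice_card_squares[OF \<open>finite K\<close> mult \<open>0 \<in> K\<close>] \<open>card ?T = card ?S\<close>
      by linarith
  qed
  then obtain x y where "x \<in> K" "y \<in> K" "x ^ 2 = c - y ^ 2"
    by auto
  then show ?thesis
    by (metis diff_add_cancel)
qed

lemma finite_subring_has_nonsquare:
  fixes K :: "'a::field set"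
  assumes "finite K" and mult: "\<And>x y. x \<in> K \<Longrightarrow> y \<in> K \<Longrightarrow> x * y \<in> K"
    and "1 \<in> K" and "-1 \<in> K" and "(1::'a) \<noteq> -1"
  shows "\<exists>n\<in>K. n \<notin> (\<lambda>x. x ^ 2) ` K"
proof (rule ccontr)
  assume "\<not> ?thesis"
  moreover have "(\<lambda>x. x ^ 2) ` K \<subseteq> K"
    using mult by (auto simp: power2_eq_square)
  ultimately have "(\<lambda>x. x ^ 2) ` K = K"
    by blast
  then have "inj_on (\<lambda>x. x ^ 2) K"
    using \<open>finite K\<close> by (simp add: eq_card_imp_inj_on)
  then have "(1::'a) = -1"
    using \<open>1 \<in> K\<close> \<open>-1 \<in> K\<close> by (auto dest: inj_onD[of _ K 1 "-1"])
  with \<open>(1::'a) \<noteq> -1\<close> show False ..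
qed

lemma waring_number_eq_degree:
  fixes Q b :: nat
  assumes p: "prime p" and Q: "Q = p ^ a" and card: "card (UNIV :: 'a::{field,finite} set) = Q ^ b"
    and b: "prime b" "b dvd Q - 1"
  shows "waring_number TYPE('a) ((Q ^ b - 1) div (b * (Q - 1))) = Some b"
proof -
  let ?K = "frobenius_fixed Q :: 'a set"
  have "CHAR('a) = p"
    using CHAR_eq_of_card_eq_prime_power[OF p, of "a * b"] card by (simp add: Q power_mult)
  then have char: "prime CHAR('a)" "Q = CHAR('a) ^ a"
    using p Q by simp_all
  have "\<not> b dvd 1"
    using b(1) by auto
  then obtain t :: 'a where basis: "power_basis ?K b t"
    and "range (\<lambda>y. y ^ (1 * ((Q ^ b - 1) div (b * (Q - 1))))) = {c ^ 1 * t ^ i | c i. c \<in> ?K \<and> i < b}"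
    using powers_in_frobenius_power_basis[OF p Q card b] by blast
  then have powers: "range (\<lambda>y. y ^ ((Q ^ b - 1) div (b * (Q - 1)))) = {w * t ^ i | w i. w \<in> ?K \<and> i < b}"
    by simp
  have sums: "\<exists>f. (\<forall>j<1::nat. f j \<in> ?K) \<and> c = (\<Sum>j<1. f j)" if "c \<in> ?K" for c
    using that by (intro exI[of _ "\<lambda>_. c"]) simp
  have "1 \<noteq> sum f J" if "card J < 1" "finite J" for J and f :: "nat \<Rightarrow> 'a"
    using that by simp
  then show ?thesis
    using waring_number_power_basis[OF basis frobenius_fixed_zero[OF char] frobenius_fixed_add[OF char]
        subset_refl powers sums frobenius_fixed_one[OF char]]
    by simp
qed

lemma waring_number_eq_twice_degree:
  fixes Q b :: nat
  assumes p: "prime p" "odd p" and Q: "Q = p ^ a" and card: "card (UNIV :: 'a::{field,finite} set) = Q ^ b"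
    and b: "prime b" "b dvd Q - 1" "odd b"
  shows "waring_number TYPE('a) (2 * ((Q ^ b - 1) div (b * (Q - 1)))) = Some (2 * b)"
proof -
  let ?K = "frobenius_fixed Q :: 'a set"
  let ?W = "(\<lambda>x. x ^ 2) ` ?K"
  have "CHAR('a) = p"
    using CHAR_eq_of_card_eq_prime_power[OF p(1), of "a * b"] card by (simp add: Q power_mult)
  then have char: "prime CHAR('a)" "Q = CHAR('a) ^ a"
    using p Q by simp_all
  have "\<not> b dvd 2"
    using primes_dvd_imp_eq[OF b(1) two_is_prime_nat] b(3) by auto
  then obtain t :: 'a where basis: "power_basis ?K b t"
    and "range (\<lambda>y. y ^ (2 * ((Q ^ b - 1) div (b * (Q - 1))))) = {c ^ 2 * t ^ i | c i. c \<in> ?K \<and> i < b}"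
    using powers_in_frobenius_power_basis[OF p(1) Q card b(1,2)] by blast
  moreover have "{c ^ 2 * t ^ i | c i. c \<in> ?K \<and> i < b} = {w * t ^ i | w i. w \<in> ?W \<and> i < b}"
    by auto
  ultimately have powers: "range (\<lambda>y. y ^ (2 * ((Q ^ b - 1) div (b * (Q - 1))))) = {w * t ^ i | w i. w \<in> ?W \<and> i < b}"
    by simp
  have W: "?W \<subseteq> ?K"
    using frobenius_fixed_mult[OF char] by (auto simp: power2_eq_square)
  have fin: "finite ?K"
    by simp
  have sums: "\<exists>f. (\<forall>j<2::nat. f j \<in> ?W) \<and> c = (\<Sum>j<2. f j)" if c: "c \<in> ?K" for c
  proof -
    obtain x y where "x \<in> ?K" "y \<in> ?K" "c = x ^ 2 + y ^ 2"
      using finite_subring_sum_two_squares[OF fin frobenius_fixed_mult[OF char] frobenius_fixed_diff[OF char]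
          frobenius_fixed_zero[OF char] c] by blast
    then show ?thesis
      by (intro exI[of _ "\<lambda>j. if j = 0 then x ^ 2 else y ^ 2"]) (auto simp: numeral_2_eq_2)
  qed
  have "(1::'a) \<noteq> -1"
  proof
    assume "(1::'a) = -1"
    then have "of_nat 2 = (0::'a)"
      by (simp add: eq_neg_iff_add_eq_0)
    then have "p dvd 2"
      using \<open>CHAR('a) = p\<close> by (simp only: of_nat_eq_0_iff_char_dvd)
    with primes_dvd_imp_eq[OF p(1) two_is_prime_nat] p(2) show False
      by auto
  qed
  then obtain n where n: "n \<in> ?K" "n \<notin> ?W"
    using finite_subring_has_nonsquare[OF fin frobenius_fixed_mult[OF char] frobenius_fixed_one[OF char]]
      frobenius_fixed_diff[OF char frobenius_fixed_zero[OF char] frobenius_fixed_one[OF char]]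
    by auto
  have "n \<noteq> sum f J" if "finite J" "card J < 2" "\<forall>j\<in>J. f j \<in> ?W" for J and f :: "nat \<Rightarrow> 'a"
  proof -
    have "J = {} \<or> (\<exists>j. J = {j})"
      using that(1,2) by (auto simp: numeral_2_eq_2 less_Suc_eq card_1_singleton_iff)
    moreover have "0 \<in> ?W"
      using frobenius_fixed_zero[OF char] by (auto intro: image_eqI[of _ _ 0])
    ultimately show ?thesis
      using n(2) that(3) by auto
  qed
  then show ?thesis
    using waring_number_power_basis[OF basis frobenius_fixed_zero[OF char] frobenius_fixed_add[OF char]
        W powers sums n(1)]
    by (simp add: mult.commute)
qed

theorem mainTheorem7:
  fixes p b a :: nat
  assumes "prime p" and "prime b" and "p \<noteq> b" and "a > 0"
    and "b dvd p ^ a - 1"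
    and "card (UNIV :: 'a set) = p ^ (a * b)"
  shows "waring_number TYPE('a::{field,finite}) ((p ^ (a * b) - 1) div (b * (p ^ a - 1))) = Some b
       \<and> (odd p \<and> odd b \<longrightarrow>
          waring_number TYPE('a) ((2 * (p ^ (a * b) - 1)) div (b * (p ^ a - 1))) = Some (2 * b))"
proof -
  \<comment> \<open>The hypotheses \<open>p \<noteq> b\<close> and \<open>a > 0\<close> are implied by the others and not used.\<close>
  let ?Q = "p ^ a"
  have card: "card (UNIV :: 'a set) = ?Q ^ b"
    using assms(6) by (simp add: power_mult)
  have "(2 * (?Q ^ b - 1)) div (b * (?Q - 1)) = 2 * ((?Q ^ b - 1) div (b * (?Q - 1)))"
    using mult_dvd_power_minus_one[OF assms(5)] by (simp add: div_mult_swap)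
  then show ?thesis
    using waring_number_eq_degree[OF assms(1) refl card assms(2,5)]
      waring_number_eq_twice_degree[OF assms(1) _ refl card assms(2,5)]
    by (simp add: power_mult)
qed

end
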